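(* Let $G$ be a finite simple graph and let $\mathcal{V}$ be a maximum-cardinality collection of pairwise edge-disjoint triangles of $G$. Then for every $\psi\in\mathcal{V}$: (1) $|base(\psi)| \neq 2$; (2) if $|base(\psi)|=3$, then exactly three triangles are singly-attached to $\psi$, and all of them share a common anchoring vertex $a$; in this case $V(\psi)\cup\{a\}$ induces a $K_4$.
   Context: Triangles are sets of three pairwise adjacent vertices, identified with their edge sets. Triangles in $\mathcal{V}$ are solution triangles. A triangle $t\notin\mathcal{V}$ shares at most one edge with each $\psi\in\mathcal{V}$. If $t\notin\mathcal{V}$ shares an edge with exactly one triangle $\psi\in\mathcal{V}$, $t$ is singly-attached to $\psi$; the edge in $E(t)\cap E(\psi)$ is called a base-edge, and the vertex of $V(t)\setminus V(\psi)$ is the anchoring vertex of $t$. For $\psi\in\mathcal{V}$, $base(\psi)$ denotes the set of edges of $\psi$ that are base-edges (i.e., that lie in some triangle singly-attached to $\psi$). *)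

theory Defs
  imports Main
begin

definition simple_graph :: "'a set \<Rightarrow> 'a set set \<Rightarrow> bool" where
  "simple_graph V E \<longleftrightarrow> finite V \<and> (\<forall>e\<in>E. e \<subseteq> V \<and> card e = 2)"

definition triangle :: "'a set \<Rightarrow> 'a set set \<Rightarrow> 'a set \<Rightarrow> bool" where
  "triangle V E t \<longleftrightarrow> t \<subseteq> V \<and> card t = 3 \<and>
     (\<forall>x\<in>t. \<forall>y\<in>t. x \<noteq> y \<longrightarrow> {x, y} \<in> E)"

definition tedges :: "'a set \<Rightarrow> 'a set set" where
  "tedges t = {e. e \<subseteq> t \<and> card e = 2}"

definition triangle_packing :: "'a set \<Rightarrow> 'a set set \<Rightarrow> 'a set set \<Rightarrow> bool" where
  "triangle_packing V E P \<longleftrightarrow> (\<forall>t\<in>P. triangle V E t) \<and>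
     (\<forall>t\<in>P. \<forall>s\<in>P. t \<noteq> s \<longrightarrow> tedges t \<inter> tedges s = {})"

definition max_triangle_packing :: "'a set \<Rightarrow> 'a set set \<Rightarrow> 'a set set \<Rightarrow> bool" where
  "max_triangle_packing V E P \<longleftrightarrow> triangle_packing V E P \<and>
     (\<forall>Q. triangle_packing V E Q \<longrightarrow> card Q \<le> card P)"

definition singly_attached ::
  "'a set \<Rightarrow> 'a set set \<Rightarrow> 'a set set \<Rightarrow> 'a set \<Rightarrow> 'a set \<Rightarrow> bool" where
  "singly_attached V E P t psi \<longleftrightarrow> triangle V E t \<and> t \<notin> P \<and> psi \<in> P \<and>
     tedges t \<inter> tedges psi \<noteq> {} \<and>
     (\<forall>phi\<in>P. phi \<noteq> psi \<longrightarrow> tedges t \<inter> tedges phi = {})"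

definition base :: "'a set \<Rightarrow> 'a set set \<Rightarrow> 'a set set \<Rightarrow> 'a set \<Rightarrow> 'a set set" where
  "base V E P psi = {e \<in> tedges psi. \<exists>t. singly_attached V E P t psi \<and> e \<in> tedges t}"

definition anchoring_vertex :: "'a set \<Rightarrow> 'a set \<Rightarrow> 'a" where
  "anchoring_vertex t psi = (THE a. a \<in> t - psi)"

end

theory Submission
  imports Defs
begin

text \<open>If two triangles singly-attached to \<open>psi\<close> along different edges had different
  anchoring vertices, they would meet in a single vertex; replacing \<open>psi\<close> by both of them
  would give a larger packing. So two base edges force a common anchoring vertex \<open>a\<close>,
  adjacent to all of \<open>psi\<close>. Then \<open>a\<close> together with any edge of \<open>psi\<close> spans a triangle whose
  other two edges already lie in singly-attached triangles, so it is singly-attached as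
  well: all three edges of \<open>psi\<close> are base edges, and the singly-attached triangles are
  exactly the three triangles \<open>insert a e\<close>.\<close>

lemma doubleton_in_tedges_iff: "{x, y} \<in> tedges t \<longleftrightarrow> x \<in> t \<and> y \<in> t \<and> x \<noteq> y"
  by (auto simp: tedges_def card_2_iff)

lemma tedges_Int: "tedges s \<inter> tedges t = tedges (s \<inter> t)"
  by (auto simp: tedges_def)

lemma tedges_empty_if_card_le_1:
  assumes "finite s" "card s \<le> 1"
  shows "tedges s = {}"
proof -
  have "card e \<noteq> 2" if "e \<subseteq> s" for e
    using card_mono[OF assms(1) that] assms(2) by linarith
  then show ?thesis
    by (auto simp: tedges_def)
qed

lemma card_tedges:
  assumes "finite t"
  shows "card (tedges t) = card t choose 2"
  unfolding tedges_def using n_subsets[OF assms] .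

lemma card_image_insert_tedges:
  assumes "finite psi" "a \<notin> psi"
  shows "card (insert a ` tedges psi) = card psi choose 2"
proof -
  have "inj_on (insert a) (tedges psi)"
    using assms(2) by (auto simp: inj_on_def tedges_def insert_ident)
  then show ?thesis
    by (simp add: card_image card_tedges assms(1))
qed

lemma tedges_subset_iff: "tedges t \<subseteq> E \<longleftrightarrow> (\<forall>x\<in>t. \<forall>y\<in>t. x \<noteq> y \<longrightarrow> {x, y} \<in> E)"
proof
  show "tedges t \<subseteq> E \<Longrightarrow> \<forall>x\<in>t. \<forall>y\<in>t. x \<noteq> y \<longrightarrow> {x, y} \<in> E"
    by (meson subsetD doubleton_in_tedges_iff)
  show "\<forall>x\<in>t. \<forall>y\<in>t. x \<noteq> y \<longrightarrow> {x, y} \<in> E \<Longrightarrow> tedges t \<subseteq> E"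
    by (auto simp: tedges_def card_2_iff)
qed

lemma triangle_iff_tedges: "triangle V E t \<longleftrightarrow> t \<subseteq> V \<and> card t = 3 \<and> tedges t \<subseteq> E"
  by (simp add: triangle_def tedges_subset_iff)

lemma ex_other_if_two_le_card:
  assumes "2 \<le> card A"
  shows "\<exists>y\<in>A. y \<noteq> x"
proof (rule ccontr)
  assume "\<not> (\<exists>y\<in>A. y \<noteq> x)"
  then have "card A \<le> card {x}"
    by (intro card_mono) auto
  with assms show False
    by simp
qed

lemma card_Int_le_1_if_card_2:
  assumes "card e1 = 2" "card e2 = 2" "e1 \<noteq> e2"
  shows "card (e1 \<inter> e2) \<le> 1"
proof -
  have fin: "finite e1" "finite e2"
    using assms(1,2) by (auto intro: card_ge_0_finite)
  have "card (e1 \<inter> e2) \<noteq> 2"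
  proof
    assume "card (e1 \<inter> e2) = 2"
    then have "e1 \<inter> e2 = e1" "e1 \<inter> e2 = e2"
      using card_subset_eq fin assms(1,2) by (metis Int_lower1, metis Int_lower2)
    with assms(3) show False
      by simp
  qed
  moreover have "card (e1 \<inter> e2) \<le> 2"
    using card_mono[OF fin(1)] assms(1) by (metis Int_lower1)
  ultimately show ?thesis
    by linarith
qed

lemma tedges_Un_eq:
  assumes "card psi = 3" "e1 \<in> tedges psi" "e2 \<in> tedges psi" "e1 \<noteq> e2"
  shows "e1 \<union> e2 = psi"
proof -
  have e: "card e1 = 2" "card e2 = 2" "e1 \<subseteq> psi" "e2 \<subseteq> psi"
    using assms(2,3) by (auto simp: tedges_def)
  then have "finite e1" "finite e2" "finite psi"
    using assms(1) by (auto intro: card_ge_0_finite)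
  then have "card (e1 \<union> e2) \<ge> 3"
    using card_Un_Int[of e1 e2] card_Int_le_1_if_card_2[OF e(1,2) assms(4)] e by simp
  with e \<open>finite psi\<close> assms(1) show ?thesis
    by (metis Un_least card_seteq)
qed

lemma tedges_insert_subset:
  assumes "e1 \<union> e2 = psi" "e \<subseteq> psi"
  shows "tedges (insert a e) \<subseteq> tedges psi \<union> tedges (insert a e1) \<union> tedges (insert a e2)"
proof
  fix f assume f: "f \<in> tedges (insert a e)"
  then obtain x y where xy: "f = {x, y}" "x \<noteq> y" "x \<in> insert a e" "y \<in> insert a e"
    by (auto simp: tedges_def card_2_iff)
  show "f \<in> tedges psi \<union> tedges (insert a e1) \<union> tedges (insert a e2)"
    using xy assms by (auto simp: doubleton_in_tedges_iff)
qed

lemma card_3_shared_edge: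
  assumes "card t = 3" "card psi = 3" "t \<noteq> psi" "e \<in> tedges t" "e \<in> tedges psi"
  obtains c where "c \<notin> psi" "t = insert c e"
proof -
  have e: "e \<subseteq> t" "e \<subseteq> psi" "card e = 2"
    using assms(4,5) by (auto simp: tedges_def)
  have "finite t" "finite psi"
    using assms(1,2) by (auto intro: card_ge_0_finite)
  then have "card (t - e) = 1"
    using e assms(1) by (simp add: card_Diff_subset finite_subset)
  then obtain c where c: "t - e = {c}"
    by (auto simp: card_Suc_eq)
  then have t: "t = insert c e"
    using e by auto
  have "c \<notin> psi"
  proof
    assume "c \<in> psi"
    then have "t \<subseteq> psi"
      using t e by auto
    then show False
      using card_subset_eq[OF \<open>finite psi\<close>] assms(1-3) by auto
  qed
  with t show thesis
    using that by blast
qed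

lemma anchoring_vertex_insert:
  assumes "e \<subseteq> psi" "a \<notin> psi"
  shows "anchoring_vertex (insert a e) psi = a"
proof -
  have "insert a e - psi = {a}"
    using assms by auto
  then show ?thesis
    by (simp add: anchoring_vertex_def)
qed

lemma triangle_packing_finite:
  assumes "simple_graph V E" "triangle_packing V E P"
  shows "finite P"
proof -
  have "P \<subseteq> Pow V"
    using assms(2) by (auto simp: triangle_packing_def triangle_def)
  then show ?thesis
    using assms(1) finite_subset by (auto simp: simple_graph_def)
qed

lemma singly_attached_eq_insert:
  assumes "triangle_packing V E P" "singly_attached V E P t psi"
    "e \<in> tedges t" "e \<in> tedges psi"
  obtains c where "c \<notin> psi" "t = insert c e"
proof (rule card_3_shared_edge)
  show "card t = 3" "card psi = 3" "t \<noteq> psi"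
    using assms(1,2) by (auto simp: singly_attached_def triangle_packing_def triangle_def)
qed (use assms(3,4) that in auto)

lemma triangle_packing_replace_by_two:
  assumes "triangle_packing V E P"
    "singly_attached V E P t1 psi" "singly_attached V E P t2 psi"
    "tedges t1 \<inter> tedges t2 = {}"
  shows "triangle_packing V E (insert t1 (insert t2 (P - {psi})))"
  using assms unfolding triangle_packing_def singly_attached_def
  by (auto simp: Int_commute)

lemma max_packing_singly_attached_share_edge:
  assumes "simple_graph V E" "max_triangle_packing V E P"
    "singly_attached V E P t1 psi" "singly_attached V E P t2 psi"
  shows "tedges t1 \<inter> tedges t2 \<noteq> {}"
proof
  assume disjoint: "tedges t1 \<inter> tedges t2 = {}"
  have pk: "triangle_packing V E P"
    using assms(2) by (simp add: max_triangle_packing_def)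
  have "t1 \<noteq> t2"
    using disjoint assms(3) by (auto simp: singly_attached_def)
  moreover have "t1 \<notin> P" "t2 \<notin> P" "psi \<in> P"
    using assms(3,4) by (auto simp: singly_attached_def)
  moreover have "finite P"
    using triangle_packing_finite[OF assms(1) pk] .
  ultimately have "card (insert t1 (insert t2 (P - {psi}))) = card P + 1"
    using card_Suc_Diff1[of P psi] by simp
  moreover have "card (insert t1 (insert t2 (P - {psi}))) \<le> card P"
    using assms(2) triangle_packing_replace_by_two[OF pk assms(3,4) disjoint]
    by (simp add: max_triangle_packing_def)
  ultimately show False
    by simp
qed

lemma singly_attached_same_anchor:
  assumes "simple_graph V E" "max_triangle_packing V E P"
    "singly_attached V E P (insert a e1) psi" "singly_attached V E P (insert b e2) psi"
    "e1 \<in> tedges psi" "e2 \<in> tedges psi" "e1 \<noteq> e2" "a \<notin> psi" "b \<notin> psi"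
  shows "a = b"
proof (rule ccontr)
  assume "a \<noteq> b"
  have e: "card e1 = 2" "card e2 = 2" "e1 \<subseteq> psi" "e2 \<subseteq> psi"
    using assms(5,6) by (auto simp: tedges_def)
  then have "insert a e1 \<inter> insert b e2 \<subseteq> e1 \<inter> e2"
    using \<open>a \<noteq> b\<close> assms(8,9) by auto
  moreover have "finite (e1 \<inter> e2)"
    using e by (auto intro: card_ge_0_finite)
  ultimately have "card (insert a e1 \<inter> insert b e2) \<le> 1"
    using card_Int_le_1_if_card_2[OF e(1,2) assms(7)] by (meson card_mono le_trans)
  then have "tedges (insert a e1) \<inter> tedges (insert b e2) = {}"
    using e by (simp add: tedges_Int tedges_empty_if_card_le_1 card_ge_0_finite)
  then show False
    using max_packing_singly_attached_share_edge[OF assms(1-4)] by simp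
qed

lemma singly_attached_insert_every_edge:
  assumes pk: "triangle_packing V E P"
    and t1: "singly_attached V E P (insert a e1) psi"
    and t2: "singly_attached V E P (insert a e2) psi"
    and "e1 \<in> tedges psi" "e2 \<in> tedges psi" "e1 \<noteq> e2" "e \<in> tedges psi" "a \<notin> psi"
  shows "singly_attached V E P (insert a e) psi"
proof -
  have psi: "psi \<in> P" "triangle V E psi"
    using t1 pk by (auto simp: singly_attached_def triangle_packing_def)
  have e: "e \<subseteq> psi" "card e = 2" "finite e"
    using assms(7) by (auto simp: tedges_def intro: card_ge_0_finite)
  have "e1 \<union> e2 = psi"
    using tedges_Un_eq[OF _ assms(4-6)] psi(2) by (simp add: triangle_def)
  then have cover: "tedges (insert a e) \<subseteq> tedges psi \<union> tedges (insert a e1) \<union> tedges (insert a e2)"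
    by (rule tedges_insert_subset[OF _ e(1)])
  have tri: "triangle V E (insert a e)"
    unfolding triangle_iff_tedges
  proof (intro conjI)
    show "insert a e \<subseteq> V"
      using t1 psi(2) e(1) by (auto simp: singly_attached_def triangle_def)
    show "card (insert a e) = 3"
      using e assms(8) by (auto simp: card_insert_if)
    have "tedges psi \<subseteq> E" "tedges (insert a e1) \<subseteq> E" "tedges (insert a e2) \<subseteq> E"
      using t1 t2 psi(2) by (auto simp: singly_attached_def triangle_iff_tedges)
    with cover show "tedges (insert a e) \<subseteq> E"
      by blast
  qed
  have shared: "e \<in> tedges (insert a e)"
    using e by (auto simp: tedges_def)
  have not_in_P: "insert a e \<notin> P"
  proof
    assume "insert a e \<in> P"
    moreover have "insert a e \<noteq> psi"
      using assms(8) by auto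
    ultimately have "tedges (insert a e) \<inter> tedges psi = {}"
      using pk psi(1) by (simp add: triangle_packing_def)
    with shared assms(7) show False
      by blast
  qed
  have "tedges (insert a e) \<inter> tedges phi = {}" if "phi \<in> P" "phi \<noteq> psi" for phi
  proof -
    have "tedges psi \<inter> tedges phi = {}"
      using pk psi(1) that unfolding triangle_packing_def by blast
    moreover have "tedges (insert a e1) \<inter> tedges phi = {}" "tedges (insert a e2) \<inter> tedges phi = {}"
      using t1 t2 that by (auto simp: singly_attached_def)
    ultimately show ?thesis
      using cover by blast
  qed
  with tri shared not_in_P psi(1) assms(7) show ?thesis
    unfolding singly_attached_def by blast
qed

lemma singly_attached_common_anchor:
  assumes sg: "simple_graph V E" and mx: "max_triangle_packing V E P"
    and "card (base V E P psi) \<ge> 2"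
  obtains a where "a \<in> V" "a \<notin> psi"
    "{t. singly_attached V E P t psi} = insert a ` tedges psi"
proof -
  have pk: "triangle_packing V E P"
    using mx by (simp add: max_triangle_packing_def)
  obtain e1 where "e1 \<in> base V E P psi"
    using assms(3) by fastforce
  moreover obtain e2 where "e2 \<in> base V E P psi" "e1 \<noteq> e2"
    using ex_other_if_two_le_card[OF assms(3)] by metis
  ultimately obtain t1 t2 where
    t1: "singly_attached V E P t1 psi" "e1 \<in> tedges t1" "e1 \<in> tedges psi" and
    t2: "singly_attached V E P t2 psi" "e2 \<in> tedges t2" "e2 \<in> tedges psi" and "e1 \<noteq> e2"
    by (auto simp: base_def)
  obtain a b where a: "a \<notin> psi" "t1 = insert a e1" and b: "b \<notin> psi" "t2 = insert b e2"
    by (metis singly_attached_eq_insert[OF pk t1] singly_attached_eq_insert[OF pk t2])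
  with t1 t2 have s1: "singly_attached V E P (insert a e1) psi"
    and s2: "singly_attached V E P (insert a e2) psi"
    using singly_attached_same_anchor[OF sg mx _ _ t1(3) t2(3) \<open>e1 \<noteq> e2\<close>] by auto
  have all: "singly_attached V E P (insert a e) psi" if "e \<in> tedges psi" for e
    using singly_attached_insert_every_edge[OF pk s1 s2 t1(3) t2(3) \<open>e1 \<noteq> e2\<close> that a(1)] .
  have "t \<in> insert a ` tedges psi" if t: "singly_attached V E P t psi" for t
  proof -
    obtain e where e: "e \<in> tedges t" "e \<in> tedges psi"
      using t by (auto simp: singly_attached_def)
    obtain c where c: "c \<notin> psi" "t = insert c e"
      using singly_attached_eq_insert[OF pk t e] .
    \<comment> \<open>Compare with the triangle on whichever of \<open>e1\<close>, \<open>e2\<close> differs from \<open>e\<close>.\<close>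
    have "c = a"
      using singly_attached_same_anchor[OF sg mx _ s1 e(2) t1(3) _ c(1) a(1)]
        singly_attached_same_anchor[OF sg mx _ s2 e(2) t2(3) _ c(1) a(1)]
        t c(2) \<open>e1 \<noteq> e2\<close> by metis
    with c e show ?thesis
      by blast
  qed
  moreover have "a \<in> V"
    using s1 by (auto simp: singly_attached_def triangle_def)
  ultimately show thesis
    using that a(1) all by blast
qed

lemma insert_complete_if_triangles:
  assumes "card psi \<ge> 2" "\<And>e. e \<in> tedges psi \<Longrightarrow> triangle V E (insert a e)"
    "x \<in> insert a psi" "y \<in> insert a psi" "x \<noteq> y"
  shows "{x, y} \<in> E"
proof -
  obtain e where "e \<in> tedges psi" "x \<in> insert a e" "y \<in> insert a e"
  proof (cases "x \<in> psi \<and> y \<in> psi")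
    case True
    then show thesis
      using that[of "{x, y}"] assms(5) by (auto simp: doubleton_in_tedges_iff)
  next
    case False
    then obtain z where "z \<in> psi" "{x, y} = {a, z}"
      using assms(3-5) by auto
    moreover obtain w where "w \<in> psi" "w \<noteq> z"
      using ex_other_if_two_le_card[OF assms(1)] by metis
    ultimately show thesis
      using that[of "{z, w}"] by (auto simp: doubleton_in_tedges_iff doubleton_eq_iff)
  qed
  then have "{x, y} \<in> tedges (insert a e)"
    using assms(5) by (simp add: doubleton_in_tedges_iff)
  moreover have "tedges (insert a e) \<subseteq> E"
    using assms(2) \<open>e \<in> tedges psi\<close> by (simp add: triangle_iff_tedges)
  ultimately show ?thesis
    by blast
qed

theorem proposition8:
  fixes V :: "'a set" and E :: "'a set set" and P :: "'a set set" and psi :: "'a set"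
  assumes "simple_graph V E"
    and "max_triangle_packing V E P"
    and "psi \<in> P"
  shows "card (base V E P psi) \<noteq> 2 \<and>
         (card (base V E P psi) = 3 \<longrightarrow>
           card {t. singly_attached V E P t psi} = 3 \<and>
           (\<exists>a. (\<forall>t. singly_attached V E P t psi \<longrightarrow> anchoring_vertex t psi = a) \<and>
                a \<in> V \<and> a \<notin> psi \<and>
                (\<forall>x\<in>psi \<union> {a}. \<forall>y\<in>psi \<union> {a}. x \<noteq> y \<longrightarrow> {x, y} \<in> E)))"
proof (cases "card (base V E P psi) \<ge> 2")
  case True
  then obtain a where a: "a \<in> V" "a \<notin> psi"
    and S: "{t. singly_attached V E P t psi} = insert a ` tedges psi"
    using singly_attached_common_anchor[OF assms(1,2)] by blast
  then have attached_iff: "singly_attached V E P t psi \<longleftrightarrow> t \<in> insert a ` tedges psi" for t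
    by blast
  have "card psi = 3" "finite psi"
    using assms(2,3) by (auto simp: max_triangle_packing_def triangle_packing_def triangle_def
        intro: card_ge_0_finite)
  then have card_edges: "card (tedges psi) = 3"
    by (simp add: card_tedges choose_two)
  have "base V E P psi = tedges psi"
    using S by (auto simp: base_def tedges_def)
  moreover have "card {t. singly_attached V E P t psi} = 3"
    using \<open>card psi = 3\<close> \<open>finite psi\<close> a(2) by (simp add: S card_image_insert_tedges choose_two)
  moreover have "anchoring_vertex t psi = a" if "singly_attached V E P t psi" for t
    using that a(2) by (auto simp: attached_iff tedges_def anchoring_vertex_insert)
  moreover have "{x, y} \<in> E" if "x \<in> insert a psi" "y \<in> insert a psi" "x \<noteq> y" for x y
  proof (rule insert_complete_if_triangles[OF _ _ that])
    show "triangle V E (insert a e)" if "e \<in> tedges psi" for e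
      using that attached_iff[of "insert a e"] by (auto simp: singly_attached_def)
  qed (simp add: \<open>card psi = 3\<close>)
  ultimately show ?thesis
    using a card_edges by auto
qed simp

end
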